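(* Let $d\ge1$, $\varepsilon>0$ and fix $T>0$. For $t\ge T$ and $x,y\in\mathbb{R}^d_\varepsilon$ the following hold, where $A\lesssim B$ for exponents means: there exist constants $C,c>0$, independent of $(t,x,y)$ in the indicated range, with $e^{-A/t}\le Ce^{-cB/t}$... more precisely, for $F,G\ge0$, "$e^{-F/t}\lesssim e^{-G/t}$" means $e^{-c_1F/t}\le Ce^{-c_2G/t}$ for some constants $C,c_1,c_2>0$, and $\asymp$ means both directions: (i) if $|x|_\rho\vee|y|_\rho>1$, then $e^{-\rho(x,y)^2/t}\asymp e^{-|x-y|^2/t}\gtrsim e^{-(|x|_\rho+|y|_\rho)^2/t}$; (ii) if $|x|_\rho\vee|y|_\rho\le1$, then $e^{-\rho(x,y)^2/t}\asymp e^{-|x-y|^2/t}\asymp e^{-(|x|_\rho+|y|_\rho)^2/t}$; (iii) for any fixed $b<1$, if $|x|_\rho>1>b\ge|y|_\rho$, then $e^{-\rho(x,y)^2/t}\asymp e^{-|x-y|^2/t}\asymp e^{-(|x|_\rho+|y|_\rho)^2/t}$.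
   Context: $\mathbb{R}^d_\varepsilon=\{x\in\mathbb{R}^d:|x|>\varepsilon\}$ (for $d=1$, $(0,\infty)$). For $x\in\mathbb{R}^d_\varepsilon$, $|x|_\rho=|x|-\varepsilon$ (for $d=1$, $|x|_\rho=|x|$), and for $x,y\in\mathbb{R}^d_\varepsilon$, $\rho(x,y)=(|x|_\rho+|y|_\rho)\wedge|x-y|$, where $a\wedge b=\min\{a,b\}$, $a\vee b=\max\{a,b\}$. The implicit constants may depend on $d,\varepsilon,T$ (and on $b$ in (iii)). *)

theory Defs
  imports "HOL-Analysis.Analysis"
begin

definition Rd_eps :: "real \<Rightarrow> (real ^ 'n::finite) set" where
  "Rd_eps eps = (if CARD('n) = 1 then {x. \<forall>i. x $ i > 0} else {x. norm x > eps})"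

definition abs_rho :: "real \<Rightarrow> real ^ 'n::finite \<Rightarrow> real" where
  "abs_rho eps x = (if CARD('n) = 1 then norm x else norm x - eps)"

definition rho :: "real \<Rightarrow> real ^ 'n::finite \<Rightarrow> real ^ 'n \<Rightarrow> real" where
  "rho eps x y = min (abs_rho eps x + abs_rho eps y) (norm (x - y))"

definition exp_lesssim :: "(real \<times> 'a \<times> 'a) set \<Rightarrow> ('a \<Rightarrow> 'a \<Rightarrow> real) \<Rightarrow> ('a \<Rightarrow> 'a \<Rightarrow> real) \<Rightarrow> bool" where
  "exp_lesssim S F G = (\<exists>C c1 c2. C > 0 \<and> c1 > 0 \<and> c2 > 0 \<and>
     (\<forall>(t, x, y) \<in> S. exp (- c1 * F x y / t) \<le> C * exp (- c2 * G x y / t)))"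

definition exp_asymp :: "(real \<times> 'a \<times> 'a) set \<Rightarrow> ('a \<Rightarrow> 'a \<Rightarrow> real) \<Rightarrow> ('a \<Rightarrow> 'a \<Rightarrow> real) \<Rightarrow> bool" where
  "exp_asymp S F G = (exp_lesssim S F G \<and> exp_lesssim S G F)"

end

theory Submission
  imports Defs
begin

text \<open>Every comparison reduces to an affine inequality \<open>G \<le> K F + M\<close> between the exponents:
  since \<open>t \<ge> T > 0\<close>, the additive constant \<open>M\<close> only costs the factor \<open>exp (M / T)\<close>.
  The affine inequalities follow from the triangle inequality, which gives
  \<open>|x|\<^sub>\<rho> - |y|\<^sub>\<rho> \<le> |x - y| \<le> |x|\<^sub>\<rho> + |y|\<^sub>\<rho> + 2\<epsilon>\<close>, together with boundedness of
  \<open>|x|\<^sub>\<rho> + |y|\<^sub>\<rho>\<close> in case (ii) and of \<open>|y|\<^sub>\<rho>\<close> in case (iii).\<close>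

lemma exp_lesssim_of_affine_bound:
  fixes S :: "(real \<times> 'a \<times> 'a) set"
  assumes "T > 0" and "K > 0" and "M \<ge> 0"
    and bound: "\<And>t x y. (t, x, y) \<in> S \<Longrightarrow> T \<le> t \<and> G x y \<le> K * F x y + M"
  shows "exp_lesssim S F G"
proof -
  have "exp (- K * F x y / t) \<le> exp (M / T) * exp (- 1 * G x y / t)"
    if "(t, x, y) \<in> S" for t x y
  proof -
    from bound[OF that] have "T \<le> t" and G: "G x y \<le> K * F x y + M" by auto
    with \<open>T > 0\<close> have "t > 0" by linarith
    have "(G x y - K * F x y) / t \<le> M / t"
      using G \<open>t > 0\<close> by (simp add: divide_right_mono)
    also have "\<dots> \<le> M / T"
      using \<open>M \<ge> 0\<close> \<open>T > 0\<close> \<open>T \<le> t\<close> by (simp add: frac_le)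
    finally have "- K * F x y / t \<le> M / T + - 1 * G x y / t"
      by (simp add: diff_divide_distrib)
    then show ?thesis
      by (simp flip: exp_add)
  qed
  then show ?thesis
    unfolding exp_lesssim_def using \<open>K > 0\<close> by (intro exI[of _ "exp (M / T)"] exI[of _ K] exI[of _ 1]) auto
qed

lemma square_le_twice_squares_if_le_add:
  fixes u v c :: real
  assumes "0 \<le> u" and "u \<le> v + c"
  shows "u\<^sup>2 \<le> 2 * v\<^sup>2 + 2 * c\<^sup>2"
proof -
  have "u\<^sup>2 \<le> (v + c)\<^sup>2"
    using assms by (simp add: power_mono)
  also have "\<dots> \<le> 2 * v\<^sup>2 + 2 * c\<^sup>2"
    using zero_le_power2[of "v - c"] by (simp add: power2_eq_square algebra_simps)
  finally show ?thesis .
qed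

lemma abs_rho_nonneg:
  assumes "x \<in> Rd_eps eps"
  shows "0 \<le> abs_rho eps x"
  using assms unfolding abs_rho_def Rd_eps_def by (auto split: if_splits)

lemma norm_diff_le_abs_rho_add:
  assumes "0 \<le> eps" and "x \<in> Rd_eps eps" and "y \<in> Rd_eps eps"
  shows "norm (x - y) \<le> abs_rho eps x + abs_rho eps y + 2 * eps"
  using assms norm_triangle_ineq4[of x y] unfolding abs_rho_def Rd_eps_def
  by (auto split: if_splits)

lemma abs_rho_diff_le_norm_diff:
  "abs_rho eps x - abs_rho eps y \<le> norm (x - y)"
  using norm_triangle_ineq2[of x y] unfolding abs_rho_def by auto

lemma rho_nonneg:
  assumes "x \<in> Rd_eps eps" and "y \<in> Rd_eps eps"
  shows "0 \<le> rho eps x y"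
  using abs_rho_nonneg[OF assms(1)] abs_rho_nonneg[OF assms(2)] unfolding rho_def by simp

lemma rho_sq_le_norm_diff_sq:
  assumes "x \<in> Rd_eps eps" and "y \<in> Rd_eps eps"
  shows "(rho eps x y)\<^sup>2 \<le> (norm (x - y))\<^sup>2"
  using rho_nonneg[OF assms] by (simp add: power_mono rho_def)

lemma norm_diff_sq_le_abs_rho_add_sq:
  assumes "0 \<le> eps" and "x \<in> Rd_eps eps" and "y \<in> Rd_eps eps"
  shows "(norm (x - y))\<^sup>2 \<le> 2 * (abs_rho eps x + abs_rho eps y)\<^sup>2 + 8 * eps\<^sup>2"
  using square_le_twice_squares_if_le_add[OF norm_ge_zero norm_diff_le_abs_rho_add[OF assms]]
  by (simp add: power_mult_distrib)

lemma norm_diff_sq_le_rho_sq: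
  assumes "0 \<le> eps" and "x \<in> Rd_eps eps" and "y \<in> Rd_eps eps"
  shows "(norm (x - y))\<^sup>2 \<le> 2 * (rho eps x y)\<^sup>2 + 8 * eps\<^sup>2"
proof (cases "abs_rho eps x + abs_rho eps y \<le> norm (x - y)")
  case True
  then show ?thesis
    using norm_diff_sq_le_abs_rho_add_sq[OF assms] by (simp add: rho_def)
next
  case False
  then show ?thesis
    by (simp add: rho_def)
qed

lemma abs_rho_add_sq_le_if_small:
  assumes "x \<in> Rd_eps eps" and "y \<in> Rd_eps eps"
    and "max (abs_rho eps x) (abs_rho eps y) \<le> 1"
  shows "(abs_rho eps x + abs_rho eps y)\<^sup>2 \<le> (norm (x - y))\<^sup>2 + 4"
proof -
  have "(abs_rho eps x + abs_rho eps y)\<^sup>2 \<le> 2\<^sup>2"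
    using assms abs_rho_nonneg[OF assms(1)] abs_rho_nonneg[OF assms(2)]
    by (intro power_mono) auto
  then show ?thesis
    by (simp add: add_increasing)
qed

lemma abs_rho_add_sq_le_if_bounded:
  assumes "x \<in> Rd_eps eps" and "y \<in> Rd_eps eps" and "abs_rho eps y \<le> b"
  shows "(abs_rho eps x + abs_rho eps y)\<^sup>2 \<le> 2 * (norm (x - y))\<^sup>2 + 8 * b\<^sup>2"
proof -
  have "abs_rho eps x + abs_rho eps y \<le> norm (x - y) + 2 * b"
    using abs_rho_diff_le_norm_diff[of eps x y] assms(3) by linarith
  with abs_rho_nonneg[OF assms(1)] abs_rho_nonneg[OF assms(2)] show ?thesis
    using square_le_twice_squares_if_le_add[of "abs_rho eps x + abs_rho eps y" "norm (x - y)" "2 * b"]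
    by (simp add: power_mult_distrib)
qed

theorem lemma2p10:
  fixes eps T :: real
  assumes "eps > 0" and "T > 0"
  shows
    "(exp_asymp {(t, x :: real ^ 'n::finite, y). t \<ge> T \<and> x \<in> Rd_eps eps \<and> y \<in> Rd_eps eps \<and>
                  max (abs_rho eps x) (abs_rho eps y) > 1}
        (\<lambda>x y. (rho eps x y)\<^sup>2) (\<lambda>x y. (norm (x - y))\<^sup>2)
      \<and> exp_lesssim {(t, x :: real ^ 'n, y). t \<ge> T \<and> x \<in> Rd_eps eps \<and> y \<in> Rd_eps eps \<and>
                  max (abs_rho eps x) (abs_rho eps y) > 1}
        (\<lambda>x y. (abs_rho eps x + abs_rho eps y)\<^sup>2) (\<lambda>x y. (norm (x - y))\<^sup>2))
    \<and>
     (exp_asymp {(t, x :: real ^ 'n, y). t \<ge> T \<and> x \<in> Rd_eps eps \<and> y \<in> Rd_eps eps \<and>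
                  max (abs_rho eps x) (abs_rho eps y) \<le> 1}
        (\<lambda>x y. (rho eps x y)\<^sup>2) (\<lambda>x y. (norm (x - y))\<^sup>2)
      \<and> exp_asymp {(t, x :: real ^ 'n, y). t \<ge> T \<and> x \<in> Rd_eps eps \<and> y \<in> Rd_eps eps \<and>
                  max (abs_rho eps x) (abs_rho eps y) \<le> 1}
        (\<lambda>x y. (norm (x - y))\<^sup>2) (\<lambda>x y. (abs_rho eps x + abs_rho eps y)\<^sup>2))
    \<and>
     (\<forall>b < 1.
       exp_asymp {(t, x :: real ^ 'n, y). t \<ge> T \<and> x \<in> Rd_eps eps \<and> y \<in> Rd_eps eps \<and>
                  abs_rho eps x > 1 \<and> b \<ge> abs_rho eps y}
        (\<lambda>x y. (rho eps x y)\<^sup>2) (\<lambda>x y. (norm (x - y))\<^sup>2)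
      \<and> exp_asymp {(t, x :: real ^ 'n, y). t \<ge> T \<and> x \<in> Rd_eps eps \<and> y \<in> Rd_eps eps \<and>
                  abs_rho eps x > 1 \<and> b \<ge> abs_rho eps y}
        (\<lambda>x y. (norm (x - y))\<^sup>2) (\<lambda>x y. (abs_rho eps x + abs_rho eps y)\<^sup>2))"
proof -
  let ?D = "{(t, x :: real ^ 'n, y). T \<le> t \<and> x \<in> Rd_eps eps \<and> y \<in> Rd_eps eps}"
  have "0 \<le> eps" using \<open>eps > 0\<close> by simp
  note affine = exp_lesssim_of_affine_bound[OF \<open>T > 0\<close>]
  have norm_rho: "exp_lesssim S (\<lambda>x y. (norm (x - y))\<^sup>2) (\<lambda>x y. (rho eps x y)\<^sup>2)"
    if "S \<subseteq> ?D" for S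
    by (rule affine[of 1 0]) (use that rho_sq_le_norm_diff_sq in auto)
  have rho_norm: "exp_lesssim S (\<lambda>x y. (rho eps x y)\<^sup>2) (\<lambda>x y. (norm (x - y))\<^sup>2)"
    if "S \<subseteq> ?D" for S
    by (rule affine[of 2 "8 * eps\<^sup>2"]) (use that norm_diff_sq_le_rho_sq[OF \<open>0 \<le> eps\<close>] in auto)
  have abs_rho_norm: "exp_lesssim S (\<lambda>x y. (abs_rho eps x + abs_rho eps y)\<^sup>2) (\<lambda>x y. (norm (x - y))\<^sup>2)"
    if "S \<subseteq> ?D" for S
    by (rule affine[of 2 "8 * eps\<^sup>2"]) (use that norm_diff_sq_le_abs_rho_add_sq[OF \<open>0 \<le> eps\<close>] in auto)
  have norm_abs_rho_small:
    "exp_lesssim S (\<lambda>x y. (norm (x - y))\<^sup>2) (\<lambda>x y. (abs_rho eps x + abs_rho eps y)\<^sup>2)"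
    if "S \<subseteq> ?D \<inter> {(t, x, y). max (abs_rho eps x) (abs_rho eps y) \<le> 1}" for S
    by (rule affine[of 1 4]) (use that in \<open>auto intro!: abs_rho_add_sq_le_if_small\<close>)
  have norm_abs_rho_bounded:
    "exp_lesssim S (\<lambda>x y. (norm (x - y))\<^sup>2) (\<lambda>x y. (abs_rho eps x + abs_rho eps y)\<^sup>2)"
    if "S \<subseteq> ?D \<inter> {(t, x, y). abs_rho eps y \<le> b}" for S b
    by (rule affine[of 2 "8 * b\<^sup>2"]) (use that in \<open>auto intro!: abs_rho_add_sq_le_if_bounded\<close>)
  show ?thesis
    unfolding exp_asymp_def
    by (intro conjI allI impI;
        rule norm_rho rho_norm abs_rho_norm norm_abs_rho_small norm_abs_rho_bounded; auto)
qed

end
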